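(* For every $t=0,1,\dots,T-1$, $H_t(s_t-\theta)\ge H_t(S_t)+K_t$.
   Context: Model. Fix an integer horizon $T\ge 2$, a discount factor $\alpha\in(0,1]$, and for $t=0,\dots,T-1$: unit ordering costs $c_t\in\mathbb R$, a salvage coefficient $c_T\in\mathbb R$, setup costs $K_t\ge 0$, functions $G_t:\mathbb R\to\mathbb R$, and independent nonnegative random demands $D_0,\dots,D_{T-1}$ with right-continuous distribution functions $F_t$ and finite means; all expectations appearing are assumed finite. Put $C_t(y)=(c_t-\alpha c_{t+1})y+G_t(y)+\alpha c_{t+1}E[D_t]$. Standing assumptions: (i) each $C_t$ is convex with $C_t(y)\to+\infty$ as $|y|\to\infty$; (ii) $K_t\ge \alpha K_{t+1}$ for $t=0,\dots,T-2$. Grid construction. Fix $\theta>0$, $z_m=m\theta$, $Z_\theta=\{z_m:m\in\mathbb Z\}$, $f_t(n)=F_t(z_{n+1})-F_t(z_n)$ ($n\ge -1$). $C^m_t=\min\{y: C_t(y)=\min_x C_t(x)\}$; with $z_{n_0}<C^m_t\le z_{n_0+1}$, $S^U_t=\min\{z_m\in Z_\theta: z_m\ge C^m_t,\ C_t(z_m)>C_t(z_{n_0})+K_t\}$. $s_{T-1}$ is a point with $s_{T-1}\le C^m_{T-1}$, $C_{T-1}(s_{T-1})=C_{T-1}(C^m_{T-1})+K_{T-1}$; $\bar I_{T-1}=s_{T-1}$. For $t=T-2,\dots,0$: $I_t=\max\{z_m\in Z_\theta: z_m<\min(\bar I_{t+1}-\theta,C^m_t)\}$, $\bar I_t=\max\{z_m\in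 Z_\theta: z_m\le I_t,\ C_t(z_m)>C_t(I_t)+K_t\}+\theta$. $H_{T-1}=C_{T-1}$, $S_{T-1}=C^m_{T-1}$; $V_t(y)=H_t(S_t)+K_t$ for $y<s_t$, $V_t(y)=H_t(y)$ for $y\ge s_t$. For $t=T-2,\dots,0$: $H_t(y)=C_t(y)+\alpha\sum_{n=-1}^\infty V_{t+1}(y-z_n)f_t(n)$; $S_t=\max\{z_m\in Z_\theta: I_t\le z_m\le S^U_t,\ H_t(z_m)=\min\{H_t(z_n):z_n\in Z_\theta, I_t\le z_n\le S^U_t\}\}$; $s_t=S_t$ if $K_t=0$, else $s_t=\min\{z_m\in Z_\theta:\bar I_t\le z_m\le S_t,\ H_t(z_m)\le H_t(S_t)+K_t\}$. *)

theory Defs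
  imports "HOL-Probability.Probability"
begin

definition distF :: "real measure \<Rightarrow> real \<Rightarrow> real" where
  "distF D x = measure D {..x}"

definition meanD :: "real measure \<Rightarrow> real" where
  "meanD D = integral\<^sup>L D (\<lambda>x. x)"

definition Ccost :: "real \<Rightarrow> (nat \<Rightarrow> real) \<Rightarrow> (nat \<Rightarrow> real \<Rightarrow> real) \<Rightarrow> (nat \<Rightarrow> real measure) \<Rightarrow> nat \<Rightarrow> real \<Rightarrow> real" where
  "Ccost \<alpha> c G M t y = (c t - \<alpha> * c (Suc t)) * y + G t y + \<alpha> * c (Suc t) * meanD (M t)"

definition zg :: "real \<Rightarrow> int \<Rightarrow> real" where
  "zg \<theta> m = real_of_int m * \<theta>"

definition fprob :: "(nat \<Rightarrow> real measure) \<Rightarrow> real \<Rightarrow> nat \<Rightarrow> int \<Rightarrow> real" where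
  "fprob M \<theta> t n = distF (M t) (zg \<theta> (n + 1)) - distF (M t) (zg \<theta> n)"

definition Cmin :: "(real \<Rightarrow> real) \<Rightarrow> real" where
  "Cmin C = (LEAST y. \<forall>x. C y \<le> C x)"

text \<open>S^U, with n0 the index with z_{n0} < C^m <= z_{n0+1}\<close>
definition SUb :: "real \<Rightarrow> (real \<Rightarrow> real) \<Rightarrow> real \<Rightarrow> real" where
  "SUb \<theta> C k = (let n0 = \<lceil>Cmin C / \<theta>\<rceil> - 1 in
     zg \<theta> (LEAST m. Cmin C \<le> zg \<theta> m \<and> C (zg \<theta> n0) + k < C (zg \<theta> m)))"

definition slast :: "(real \<Rightarrow> real) \<Rightarrow> real \<Rightarrow> real" where
  "slast C k = (SOME s. s \<le> Cmin C \<and> C s = C (Cmin C) + k)"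

definition Vfun :: "real \<Rightarrow> (real \<Rightarrow> real) \<Rightarrow> real \<Rightarrow> real \<Rightarrow> real \<Rightarrow> real" where
  "Vfun k H S s y = (if y < s then H S + k else H y)"

text \<open>Backward recursion. stage ... j describes period t = T-1-j and returns
  (H_t, S_t, s_t, I_t, Ibar_t). For t = T-1 the component I is a dummy (set to s_{T-1}).
  The sum over n >= -1 is written as a series over k :: nat with n = k - 1.\<close>
fun stage :: "nat \<Rightarrow> real \<Rightarrow> (nat \<Rightarrow> real) \<Rightarrow> real \<Rightarrow> (nat \<Rightarrow> real \<Rightarrow> real) \<Rightarrow> (nat \<Rightarrow> int \<Rightarrow> real)
    \<Rightarrow> nat \<Rightarrow> (real \<Rightarrow> real) \<times> real \<times> real \<times> real \<times> real" where
  "stage T \<alpha> K \<theta> C f 0 =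
     (C (T - 1), Cmin (C (T - 1)), slast (C (T - 1)) (K (T - 1)),
      slast (C (T - 1)) (K (T - 1)), slast (C (T - 1)) (K (T - 1)))"
| "stage T \<alpha> K \<theta> C f (Suc j) =
    (case stage T \<alpha> K \<theta> C f j of (H', S', s', _, Ib') \<Rightarrow>
     (let t = T - 2 - j;
          V' = Vfun (K (Suc t)) H' S' s';
          H = (\<lambda>y. C t y + \<alpha> * (\<Sum>k. V' (y - zg \<theta> (int k - 1)) * f t (int k - 1)));
          I = zg \<theta> (GREATEST m. zg \<theta> m < min (Ib' - \<theta>) (Cmin (C t)));
          Ib = zg \<theta> (GREATEST m. zg \<theta> m \<le> I \<and> C t I + K t < C t (zg \<theta> m)) + \<theta>;
          SU = SUb \<theta> (C t) (K t);
          S = zg \<theta> (GREATEST m. I \<le> zg \<theta> m \<and> zg \<theta> m \<le> SU \<and>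
                   (\<forall>n. I \<le> zg \<theta> n \<and> zg \<theta> n \<le> SU \<longrightarrow> H (zg \<theta> m) \<le> H (zg \<theta> n)));
          s = (if K t = 0 then S
               else zg \<theta> (LEAST m. Ib \<le> zg \<theta> m \<and> zg \<theta> m \<le> S \<and> H (zg \<theta> m) \<le> H S + K t))
      in (H, S, s, I, Ib)))"

definition Hf where "Hf T \<alpha> K \<theta> C f t = fst (stage T \<alpha> K \<theta> C f (T - 1 - t))"
definition Sf where "Sf T \<alpha> K \<theta> C f t = fst (snd (stage T \<alpha> K \<theta> C f (T - 1 - t)))"
definition sf where "sf T \<alpha> K \<theta> C f t = fst (snd (snd (stage T \<alpha> K \<theta> C f (T - 1 - t))))"
definition Vf where
  "Vf T \<alpha> K \<theta> C f t = Vfun (K t) (Hf T \<alpha> K \<theta> C f t) (Sf T \<alpha> K \<theta> C f t) (sf T \<alpha> K \<theta> C f t)"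

end

theory Submission
  imports Defs
begin

text \<open>The inequality is proved along the backward recursion, together with the invariant
  \<open>Ibar_t \<le> s_t\<close>. Every demand is at least \<open>z_{-1} = -\<theta>\<close> and \<open>I_t < Ibar_{t+1} - \<theta>\<close>, so the
  invariant for period \<open>t+1\<close> makes every term of the series defining \<open>H_t(y)\<close> constant for
  \<open>y \<le> I_t\<close>: left of \<open>I_t\<close> the function \<open>H_t\<close> is \<open>C_t\<close> plus a constant (no summability or
  distributional hypothesis is needed), and \<open>C_t\<close> is decreasing there since \<open>I_t \<le> C^m_t\<close>.
  If \<open>K_t = 0\<close>, then \<open>s_t = S_t\<close>, and \<open>S_t - \<theta>\<close> either lies in the grid window over which \<open>S_t\<close>
  minimises \<open>H_t\<close>, or \<open>S_t = I_t\<close> and monotonicity of \<open>C_t\<close> applies. If \<open>K_t > 0\<close>, either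
  \<open>s_t - \<theta>\<close> is a grid point rejected by the minimality of \<open>s_t\<close>, or \<open>s_t = Ibar_t\<close>, and
  \<open>Ibar_t - \<theta>\<close> was chosen with \<open>C_t(Ibar_t - \<theta>) > C_t(I_t) + K_t\<close> while \<open>H_t(S_t) \<le> H_t(I_t)\<close>.\<close>

lemma int_bounded_above_has_max:
  fixes P :: "int \<Rightarrow> bool"
  assumes "P k" and "\<And>m. P m \<Longrightarrow> m \<le> b"
  shows "\<exists>x. P x \<and> (\<forall>m. P m \<longrightarrow> m \<le> x)"
proof -
  let ?A = "{m. P m \<and> k \<le> m}"
  have fin: "finite ?A"
    by (rule finite_subset[of _ "{k..b}"]) (auto dest: assms(2))
  have max_in: "Max ?A \<in> ?A"
    using fin assms(1) by (intro Max_in) auto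
  moreover have "m \<le> Max ?A" if "P m" for m
    using that Max_ge[OF fin, of m] max_in by (cases "k \<le> m") auto
  ultimately show ?thesis by blast
qed

lemma int_Greatest:
  fixes P :: "int \<Rightarrow> bool"
  assumes "P k" and "\<And>m. P m \<Longrightarrow> m \<le> b"
  shows "P (GREATEST m. P m)" and "P m \<Longrightarrow> m \<le> (GREATEST m. P m)"
proof -
  obtain x where x: "P x" "\<And>m. P m \<Longrightarrow> m \<le> x"
    using int_bounded_above_has_max[of P, OF assms] by blast
  then have "(GREATEST m. P m) = x" by (rule Greatest_equality)
  with x show "P (GREATEST m. P m)" and "P m \<Longrightarrow> m \<le> (GREATEST m. P m)" by simp_all
qed

lemma int_Least:
  fixes P :: "int \<Rightarrow> bool"
  assumes "P k" and "\<And>m. P m \<Longrightarrow> b \<le> m"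
  shows "P (LEAST m. P m)" and "P m \<Longrightarrow> (LEAST m. P m) \<le> m"
proof -
  obtain x where x: "P (- x)" "\<And>m. P (- m) \<Longrightarrow> m \<le> x"
    using int_bounded_above_has_max[of "\<lambda>m. P (- m)" "- k" "- b"] assms by force
  have "m \<le> x" if "P (- m)" for m using x(2) that .
  then have "- x \<le> m" if "P m" for m using that by (metis minus_le_iff minus_minus)
  with x(1) have "(LEAST m. P m) = - x" by (intro Least_equality) auto
  with x(1) \<open>\<And>m. P m \<Longrightarrow> - x \<le> m\<close>
  show "P (LEAST m. P m)" and "P m \<Longrightarrow> (LEAST m. P m) \<le> m" by simp_all
qed

lemma zg_le_iff: "0 < \<theta> \<Longrightarrow> zg \<theta> a \<le> zg \<theta> b \<longleftrightarrow> a \<le> b"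
  by (simp add: zg_def)

lemma zg_less_iff: "0 < \<theta> \<Longrightarrow> zg \<theta> a < zg \<theta> b \<longleftrightarrow> a < b"
  by (simp add: zg_def)

lemma zg_add_one: "zg \<theta> (m + 1) = zg \<theta> m + \<theta>"
  by (simp add: zg_def algebra_simps)

lemma zg_diff_one: "zg \<theta> (m - 1) = zg \<theta> m - \<theta>"
  by (simp add: zg_def algebra_simps)

lemma zg_floor_le: "0 < \<theta> \<Longrightarrow> zg \<theta> \<lfloor>x / \<theta>\<rfloor> \<le> x"
  by (simp add: zg_def) (metis floor_divide_lower)

lemma le_zg_ceiling: "0 < \<theta> \<Longrightarrow> x \<le> zg \<theta> \<lceil>x / \<theta>\<rceil>"
  by (simp add: zg_def) (metis ceiling_divide_upper)

lemma grid_Greatest: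
  assumes "0 < \<theta>" and "P k" and "\<And>m. P m \<Longrightarrow> zg \<theta> m \<le> b"
  shows "P (GREATEST m. P m)" and "P m \<Longrightarrow> m \<le> (GREATEST m. P m)"
proof -
  have "m \<le> \<lfloor>b / \<theta>\<rfloor>" if "P m" for m
    using assms(1) assms(3)[OF that] by (simp add: zg_def le_floor_iff pos_le_divide_eq)
  then show "P (GREATEST m. P m)" and "P m \<Longrightarrow> m \<le> (GREATEST m. P m)"
    using int_Greatest[of P k] assms(2) by blast+
qed

lemma grid_Least:
  assumes "0 < \<theta>" and "P k" and "\<And>m. P m \<Longrightarrow> a \<le> zg \<theta> m"
  shows "P (LEAST m. P m)" and "P m \<Longrightarrow> (LEAST m. P m) \<le> m"
proof -
  have "\<lceil>a / \<theta>\<rceil> \<le> m" if "P m" for m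
    using assms(1) assms(3)[OF that] by (simp add: zg_def ceiling_le_iff pos_divide_le_eq)
  then show "P (LEAST m. P m)" and "P m \<Longrightarrow> (LEAST m. P m) \<le> m"
    using int_Least[of P k] assms(2) by blast+
qed

lemma grid_Greatest_less:
  assumes "0 < \<theta>"
  shows "zg \<theta> (GREATEST m. zg \<theta> m < c) < c"
proof -
  have "zg \<theta> \<lfloor>(c - \<theta>) / \<theta>\<rfloor> < c"
    using zg_floor_le[OF assms, of "c - \<theta>"] assms by simp
  from grid_Greatest(1)[where P = "\<lambda>m. zg \<theta> m < c" and b = c, OF assms this less_imp_le]
  show ?thesis .
qed

lemma grid_Greatest_argmin:
  fixes h :: "real \<Rightarrow> real"
  assumes "0 < \<theta>" and "a = zg \<theta> i" and "a \<le> b"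
  defines "m \<equiv> GREATEST m. a \<le> zg \<theta> m \<and> zg \<theta> m \<le> b \<and>
                 (\<forall>n. a \<le> zg \<theta> n \<and> zg \<theta> n \<le> b \<longrightarrow> h (zg \<theta> m) \<le> h (zg \<theta> n))"
  shows "a \<le> zg \<theta> m" and "zg \<theta> m \<le> b"
    and "\<And>n. a \<le> zg \<theta> n \<Longrightarrow> zg \<theta> n \<le> b \<Longrightarrow> h (zg \<theta> m) \<le> h (zg \<theta> n)"
proof -
  define P where "P m \<longleftrightarrow> a \<le> zg \<theta> m \<and> zg \<theta> m \<le> b \<and>
                 (\<forall>n. a \<le> zg \<theta> n \<and> zg \<theta> n \<le> b \<longrightarrow> h (zg \<theta> m) \<le> h (zg \<theta> n))" for m
  let ?N = "{n. a \<le> zg \<theta> n \<and> zg \<theta> n \<le> b}"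
  have "finite ?N"
    by (rule finite_subset[of _ "{i..\<lfloor>b / \<theta>\<rfloor>}"])
       (auto simp: assms(2) zg_def le_floor_iff pos_le_divide_eq \<open>0 < \<theta>\<close>)
  moreover have "?N \<noteq> {}" using assms(2,3) by auto
  ultimately obtain j where "P j"
    using arg_min_if_finite[of ?N "\<lambda>n. h (zg \<theta> n)"] unfolding P_def by force
  have "P m"
    unfolding m_def P_def[symmetric] by (rule grid_Greatest(1)[where P = P and b = b, OF \<open>0 < \<theta>\<close> \<open>P j\<close>]) (simp add: P_def)
  then show "a \<le> zg \<theta> m" and "zg \<theta> m \<le> b"
    and "\<And>n. a \<le> zg \<theta> n \<Longrightarrow> zg \<theta> n \<le> b \<Longrightarrow> h (zg \<theta> m) \<le> h (zg \<theta> n)"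
    unfolding P_def by blast+
qed

lemma filterlim_at_bot_ex_gt:
  fixes C :: "real \<Rightarrow> real"
  assumes "filterlim C at_top at_bot"
  obtains x0 where "\<And>x. x \<le> x0 \<Longrightarrow> B < C x"
proof -
  have "eventually (\<lambda>x. B < C x) at_bot"
    using assms filterlim_at_top_dense by blast
  then show ?thesis using that unfolding eventually_at_bot_linorder by blast
qed

lemma filterlim_at_top_ex_gt:
  fixes C :: "real \<Rightarrow> real"
  assumes "filterlim C at_top at_top"
  obtains x0 where "\<And>x. x0 \<le> x \<Longrightarrow> B < C x"
proof -
  have "eventually (\<lambda>x. B < C x) at_top"
    using assms filterlim_at_top_dense by blast
  then show ?thesis using that unfolding eventually_at_top_linorder by blast
qed

lemma convex_on_antimono_below_min:
  fixes C :: "real \<Rightarrow> real"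
  assumes cv: "convex_on UNIV C" and min: "\<And>x. C m \<le> C x" and "x \<le> y" and "y \<le> m"
  shows "C y \<le> C x"
proof (cases "x = m")
  case True
  then show ?thesis using assms by auto
next
  case False
  then have "x < m" using assms by auto
  define u where "u = (y - x) / (m - x)"
  have u: "0 \<le> u" "u \<le> 1"
    using assms \<open>x < m\<close> by (auto simp: u_def field_simps)
  have "u * (m - x) = y - x"
    using \<open>x < m\<close> by (simp add: u_def)
  then have "y = (1 - u) * x + u * m"
    by (simp add: algebra_simps)
  have "C y \<le> (1 - u) * C x + u * C m"
    using convex_onD[OF cv, of u x m] u \<open>y = (1 - u) * x + u * m\<close> by simp
  also have "\<dots> \<le> (1 - u) * C x + u * C x"
    using min u by (simp add: mult_left_mono)
  finally show ?thesis by (simp add: algebra_simps)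
qed

lemma continuous_coercive_has_min:
  fixes C :: "real \<Rightarrow> real"
  assumes cont: "continuous_on UNIV C"
    and top: "filterlim C at_top at_top" and bot: "filterlim C at_top at_bot"
  shows "\<exists>x. \<forall>y. C x \<le> C y"
proof -
  obtain a where a: "\<And>x. x \<le> a \<Longrightarrow> C 0 < C x" using filterlim_at_bot_ex_gt[OF bot, where B = "C 0"] by blast
  obtain b where b: "\<And>x. b \<le> x \<Longrightarrow> C 0 < C x" using filterlim_at_top_ex_gt[OF top, where B = "C 0"] by blast
  have "\<exists>x\<in>{min a 0..max b 0}. \<forall>y\<in>{min a 0..max b 0}. C x \<le> C y"
    by (intro continuous_attains_inf continuous_on_subset[OF cont]) auto
  then obtain x where x: "x \<in> {min a 0..max b 0}" "\<And>y. y \<in> {min a 0..max b 0} \<Longrightarrow> C x \<le> C y"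
    by blast
  have "C x \<le> C y" for y
  proof (cases "y \<in> {min a 0..max b 0}")
    case False
    then have "C 0 < C y" using a b by fastforce
    then show ?thesis using x(2)[of 0] by simp
  qed (use x in blast)
  then show ?thesis by blast
qed

lemma Cmin_minimal:
  fixes C :: "real \<Rightarrow> real"
  assumes cont: "continuous_on UNIV C"
    and top: "filterlim C at_top at_top" and bot: "filterlim C at_top at_bot"
  shows "C (Cmin C) \<le> C x"
proof -
  define A where "A = {y. \<forall>x. C y \<le> C x}"
  obtain x0 where "x0 \<in> A"
    using continuous_coercive_has_min[OF assms] by (auto simp: A_def)
  obtain a where a: "\<And>x. x \<le> a \<Longrightarrow> C x0 < C x" using filterlim_at_bot_ex_gt[OF bot, where B = "C x0"] by blast
  have bdd: "bdd_below A"
  proof (rule bdd_belowI)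
    fix y assume "y \<in> A"
    then have "C y \<le> C x0" using \<open>x0 \<in> A\<close> by (simp add: A_def)
    then show "a \<le> y" using a[of y] by (cases "y \<le> a") auto
  qed
  have "A = (\<Inter>x. {y. C y \<le> C x})" by (auto simp: A_def)
  then have "closed A"
    using closed_Collect_le[OF cont continuous_on_const] by auto
  then have inf_in: "Inf A \<in> A"
    using closed_contains_Inf[OF _ bdd] \<open>x0 \<in> A\<close> by blast
  have "Cmin C = Inf A"
    unfolding Cmin_def
  proof (rule Least_equality)
    show "\<forall>x. C (Inf A) \<le> C x" using inf_in by (simp add: A_def)
    show "Inf A \<le> y" if "\<forall>x. C y \<le> C x" for y
      using that cInf_lower[OF _ bdd] by (simp add: A_def)
  qed
  then show ?thesis using inf_in by (simp add: A_def)
qed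

lemma slast_spec:
  fixes C :: "real \<Rightarrow> real"
  assumes cont: "continuous_on UNIV C" and bot: "filterlim C at_top at_bot" and "0 \<le> k"
  shows "slast C k \<le> Cmin C" and "C (slast C k) = C (Cmin C) + k"
proof -
  obtain x0 where x0: "\<And>x. x \<le> x0 \<Longrightarrow> C (Cmin C) + k < C x"
    using filterlim_at_bot_ex_gt[OF bot, where B = "C (Cmin C) + k"] by blast
  have "\<exists>s. min x0 (Cmin C) \<le> s \<and> s \<le> Cmin C \<and> C s = C (Cmin C) + k"
    using x0[of "min x0 (Cmin C)"] \<open>0 \<le> k\<close>
    by (intro IVT2' continuous_on_subset[OF cont]) auto
  then have "\<exists>s. s \<le> Cmin C \<and> C s = C (Cmin C) + k" by blast
  from someI_ex[OF this] show "slast C k \<le> Cmin C" and "C (slast C k) = C (Cmin C) + k"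
    unfolding slast_def by auto
qed

lemma Cmin_le_SUb:
  fixes C :: "real \<Rightarrow> real"
  assumes top: "filterlim C at_top at_top" and "0 < \<theta>"
  shows "Cmin C \<le> SUb \<theta> C k"
proof -
  define c where "c = C (zg \<theta> (\<lceil>Cmin C / \<theta>\<rceil> - 1)) + k"
  obtain x1 where x1: "\<And>x. x1 \<le> x \<Longrightarrow> c < C x" using filterlim_at_top_ex_gt[OF top, where B = "c"] by blast
  have "Cmin C \<le> zg \<theta> \<lceil>max x1 (Cmin C) / \<theta>\<rceil> \<and> c < C (zg \<theta> \<lceil>max x1 (Cmin C) / \<theta>\<rceil>)"
    using le_zg_ceiling[OF \<open>0 < \<theta>\<close>, of "max x1 (Cmin C)"] x1 by auto
  from grid_Least(1)[where P = "\<lambda>m. Cmin C \<le> zg \<theta> m \<and> c < C (zg \<theta> m)" and a = "Cmin C",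
      OF \<open>0 < \<theta>\<close> this]
  show ?thesis by (simp add: SUb_def c_def Let_def)
qed

lemma grid_Greatest_exceeding:
  fixes C :: "real \<Rightarrow> real"
  assumes bot: "filterlim C at_top at_bot" and "0 < \<theta>" and "0 \<le> k" and "x = zg \<theta> i"
  defines "m \<equiv> GREATEST m. zg \<theta> m \<le> x \<and> C x + k < C (zg \<theta> m)"
  shows "zg \<theta> m + \<theta> \<le> x" and "C x + k < C (zg \<theta> m)"
proof -
  obtain x0 where x0: "\<And>y. y \<le> x0 \<Longrightarrow> C x + k < C y"
    using filterlim_at_bot_ex_gt[OF bot, where B = "C x + k"] by blast
  have "zg \<theta> \<lfloor>min x0 x / \<theta>\<rfloor> \<le> x \<and> C x + k < C (zg \<theta> \<lfloor>min x0 x / \<theta>\<rfloor>)"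
    using zg_floor_le[OF \<open>0 < \<theta>\<close>, of "min x0 x"] x0 by simp
  from grid_Greatest(1)[where P = "\<lambda>m. zg \<theta> m \<le> x \<and> C x + k < C (zg \<theta> m)" and b = x,
      OF \<open>0 < \<theta>\<close> this conjunct1]
  have "zg \<theta> m \<le> x" and gt: "C x + k < C (zg \<theta> m)"
    unfolding m_def by blast+
  moreover have "zg \<theta> m \<noteq> x" using gt \<open>0 \<le> k\<close> by auto
  ultimately have "m < i"
    using \<open>x = zg \<theta> i\<close> zg_less_iff[OF \<open>0 < \<theta>\<close>] by fastforce
  then show "zg \<theta> m + \<theta> \<le> x"
    using \<open>x = zg \<theta> i\<close> zg_le_iff[OF \<open>0 < \<theta>\<close>, of "m + 1" i] by (simp add: zg_add_one)
  show "C x + k < C (zg \<theta> m)" by (rule gt)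
qed

lemma expected_value_left_of_threshold:
  assumes "0 \<le> \<theta>" and "\<And>x. x < b \<Longrightarrow> V x = v" and "y + \<theta> < b"
  shows "(\<Sum>n. V (y - zg \<theta> (int n - 1)) * f (int n - 1)) = (\<Sum>n. v * f (int n - 1))"
proof -
  have "y - zg \<theta> (int n - 1) < b" for n :: nat
  proof -
    have "0 \<le> \<theta> * real n" using assms(1) by simp
    then show ?thesis using assms(3) by (simp add: zg_def algebra_simps)
  qed
  then show ?thesis using assms(2) by simp
qed

lemma gap_without_setup_cost:
  fixes C H :: "real \<Rightarrow> real"
  assumes "0 < \<theta>"
    and C_antimono: "\<And>x. x \<le> I \<Longrightarrow> C I \<le> C x"
    and H_left: "\<And>y. y \<le> I \<Longrightarrow> H y = C y + a"
    and "I = zg \<theta> mI" and "S = zg \<theta> mS" and "I \<le> S" and "S \<le> SU"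
    and S_min: "\<And>n. I \<le> zg \<theta> n \<Longrightarrow> zg \<theta> n \<le> SU \<Longrightarrow> H S \<le> H (zg \<theta> n)"
  shows "H S \<le> H (S - \<theta>)"
proof (cases "I < S")
  case True
  then have "I \<le> zg \<theta> (mS - 1)"
    using assms(1,4,5) by (simp add: zg_less_iff zg_le_iff)
  moreover have "zg \<theta> (mS - 1) \<le> SU"
    using assms(1,5,7) by (simp add: zg_diff_one)
  ultimately have "H S \<le> H (zg \<theta> (mS - 1))"
    using S_min by blast
  then show ?thesis
    using assms(5) by (simp add: zg_diff_one)
next
  case False
  then have "S = I" using \<open>I \<le> S\<close> by simp
  moreover have "C I \<le> C (I - \<theta>)" using C_antimono \<open>0 < \<theta>\<close> by simp
  ultimately show ?thesis
    using H_left[of I] H_left[of "I - \<theta>"] \<open>0 < \<theta>\<close> by simp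
qed

lemma gap_with_setup_cost:
  fixes C H :: "real \<Rightarrow> real"
  assumes "0 < \<theta>" and "0 \<le> k"
    and H_left: "\<And>y. y \<le> I \<Longrightarrow> H y = C y + a"
    and "Ib = zg \<theta> mg + \<theta>" and "Ib \<le> I" and "C I + k < C (zg \<theta> mg)"
    and "H S \<le> H I" and "S = zg \<theta> mS" and "Ib \<le> S"
  defines "ms \<equiv> LEAST m. Ib \<le> zg \<theta> m \<and> zg \<theta> m \<le> S \<and> H (zg \<theta> m) \<le> H S + k"
  shows "Ib \<le> zg \<theta> ms" and "H S + k \<le> H (zg \<theta> ms - \<theta>)"
proof -
  have "Ib \<le> zg \<theta> mS \<and> zg \<theta> mS \<le> S \<and> H (zg \<theta> mS) \<le> H S + k"
    using assms(2,8,9) by simp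
  from grid_Least[where P = "\<lambda>m. Ib \<le> zg \<theta> m \<and> zg \<theta> m \<le> S \<and> H (zg \<theta> m) \<le> H S + k",
      OF \<open>0 < \<theta>\<close> this conjunct1]
  have "Ib \<le> zg \<theta> ms" and "zg \<theta> ms \<le> S"
    and least: "\<And>n. Ib \<le> zg \<theta> n \<Longrightarrow> zg \<theta> n \<le> S \<Longrightarrow> H (zg \<theta> n) \<le> H S + k \<Longrightarrow> ms \<le> n"
    unfolding ms_def by blast+
  then show "Ib \<le> zg \<theta> ms" by simp
  show "H S + k \<le> H (zg \<theta> ms - \<theta>)"
  proof (cases "Ib \<le> zg \<theta> (ms - 1)")
    case True
    moreover have "zg \<theta> (ms - 1) \<le> S"
      using \<open>zg \<theta> ms \<le> S\<close> \<open>0 < \<theta>\<close> by (simp add: zg_diff_one)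
    ultimately have "\<not> H (zg \<theta> (ms - 1)) \<le> H S + k"
      using least[of "ms - 1"] by force
    then show ?thesis by (simp add: zg_diff_one)
  next
    case False
    then have "ms - 1 = mg"
      using \<open>Ib \<le> zg \<theta> ms\<close> assms(1,4) by (simp add: zg_le_iff flip: zg_add_one)
    then have "zg \<theta> ms - \<theta> = zg \<theta> mg" by (simp flip: zg_diff_one)
    moreover have "zg \<theta> mg \<le> I" using assms(4,5) \<open>0 < \<theta>\<close> by simp
    ultimately show ?thesis
      using H_left[of I] H_left[of "zg \<theta> mg"] assms(6,7) by simp
  qed
qed

lemma stage_Suc_components:
  fixes C :: "nat \<Rightarrow> real \<Rightarrow> real" and T j :: nat
  assumes prev: "stage T \<alpha> K \<theta> C f j = (H', S', s', I', Ib')"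
    and cur: "stage T \<alpha> K \<theta> C f (Suc j) = (H, S, s, I, Ib)"
  defines "t \<equiv> T - 2 - j" and "SU \<equiv> SUb \<theta> (C (T - 2 - j)) (K (T - 2 - j))"
  shows "H = (\<lambda>y. C t y + \<alpha> * (\<Sum>n. Vfun (K (Suc t)) H' S' s' (y - zg \<theta> (int n - 1)) * f t (int n - 1)))"
    and "I = zg \<theta> (GREATEST m. zg \<theta> m < min (Ib' - \<theta>) (Cmin (C t)))"
    and "Ib = zg \<theta> (GREATEST m. zg \<theta> m \<le> I \<and> C t I + K t < C t (zg \<theta> m)) + \<theta>"
    and "S = zg \<theta> (GREATEST m. I \<le> zg \<theta> m \<and> zg \<theta> m \<le> SU \<and>
                     (\<forall>n. I \<le> zg \<theta> n \<and> zg \<theta> n \<le> SU \<longrightarrow> H (zg \<theta> m) \<le> H (zg \<theta> n)))"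
    and "s = (if K t = 0 then S
              else zg \<theta> (LEAST m. Ib \<le> zg \<theta> m \<and> zg \<theta> m \<le> S \<and> H (zg \<theta> m) \<le> H S + K t))"
  using cur[unfolded stage.simps prev, simplified Let_def prod.case]
  unfolding t_def SU_def by auto

lemma stage_Suc_gap:
  fixes C :: "nat \<Rightarrow> real \<Rightarrow> real" and T j :: nat
  defines "t \<equiv> T - 2 - j"
  assumes cv: "convex_on UNIV (C t)"
    and top: "filterlim (C t) at_top at_top" and bot: "filterlim (C t) at_top at_bot"
    and "0 \<le> K t" and "0 < \<theta>"
    and prev: "stage T \<alpha> K \<theta> C f j = (H', S', s', I', Ib')" and "Ib' \<le> s'"
    and cur: "stage T \<alpha> K \<theta> C f (Suc j) = (H, S, s, I, Ib)"
  shows "Ib \<le> s \<and> H S + K t \<le> H (s - \<theta>)"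
proof -
  let ?SU = "SUb \<theta> (C t) (K t)"
  note H = stage_Suc_components(1)[OF prev cur, folded t_def]
    and I = stage_Suc_components(2)[OF prev cur, folded t_def]
    and Ib = stage_Suc_components(3)[OF prev cur, folded t_def]
    and S = stage_Suc_components(4)[OF prev cur, folded t_def]
    and s = stage_Suc_components(5)[OF prev cur, folded t_def]
  have cont: "continuous_on UNIV (C t)"
    using convex_on_continuous[OF open_UNIV cv] .
  have C_min: "\<And>x. C t (Cmin (C t)) \<le> C t x"
    using Cmin_minimal[OF cont top bot] .
  define mI where "mI = (GREATEST m. zg \<theta> m < min (Ib' - \<theta>) (Cmin (C t)))"
  have I_grid: "I = zg \<theta> mI" and "I + \<theta> < Ib'" and "I \<le> Cmin (C t)"
    using grid_Greatest_less[OF \<open>0 < \<theta>\<close>, of "min (Ib' - \<theta>) (Cmin (C t))"] I by (simp_all add: mI_def)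
  define a where "a = \<alpha> * (\<Sum>n. (H' S' + K (Suc t)) * f t (int n - 1))"
  have H_left: "H y = C t y + a" if "y \<le> I" for y
    using expected_value_left_of_threshold[of \<theta> Ib' "Vfun (K (Suc t)) H' S' s'" "H' S' + K (Suc t)" y]
      that \<open>I + \<theta> < Ib'\<close> \<open>Ib' \<le> s'\<close> \<open>0 < \<theta>\<close>
    by (simp add: H a_def Vfun_def)
  define mg where "mg = (GREATEST m. zg \<theta> m \<le> I \<and> C t I + K t < C t (zg \<theta> m))"
  have Ib_eq: "Ib = zg \<theta> mg + \<theta>" and "Ib \<le> I" and mg_gt: "C t I + K t < C t (zg \<theta> mg)"
    using grid_Greatest_exceeding[OF bot \<open>0 < \<theta>\<close> \<open>0 \<le> K t\<close> I_grid] Ib by (simp_all add: mg_def)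
  have "I \<le> ?SU"
    using \<open>I \<le> Cmin (C t)\<close> Cmin_le_SUb[OF top \<open>0 < \<theta>\<close>, of "K t"] by linarith
  define mS where "mS = (GREATEST m. I \<le> zg \<theta> m \<and> zg \<theta> m \<le> ?SU \<and>
                     (\<forall>n. I \<le> zg \<theta> n \<and> zg \<theta> n \<le> ?SU \<longrightarrow> H (zg \<theta> m) \<le> H (zg \<theta> n)))"
  note argmin = grid_Greatest_argmin[OF \<open>0 < \<theta>\<close> I_grid \<open>I \<le> ?SU\<close>, where h = H, folded mS_def]
  have S_grid: "S = zg \<theta> mS" using S by (simp add: mS_def)
  have "I \<le> S" and "S \<le> ?SU" and S_min: "\<And>n. I \<le> zg \<theta> n \<Longrightarrow> zg \<theta> n \<le> ?SU \<Longrightarrow> H S \<le> H (zg \<theta> n)"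
    using argmin S_grid by simp_all
  show ?thesis
  proof (cases "K t = 0")
    case True
    have "\<And>x. x \<le> I \<Longrightarrow> C t I \<le> C t x"
      using convex_on_antimono_below_min[OF cv C_min] \<open>I \<le> Cmin (C t)\<close> by blast
    then have "H S \<le> H (S - \<theta>)"
      using gap_without_setup_cost[OF \<open>0 < \<theta>\<close> _ H_left I_grid S_grid \<open>I \<le> S\<close> \<open>S \<le> ?SU\<close> S_min] by blast
    then show ?thesis using True s \<open>Ib \<le> I\<close> \<open>I \<le> S\<close> by simp
  next
    case False
    have "H S \<le> H I"
      using S_min[of mI] I_grid \<open>I \<le> ?SU\<close> by simp
    from gap_with_setup_cost[OF \<open>0 < \<theta>\<close> \<open>0 \<le> K t\<close> H_left Ib_eq \<open>Ib \<le> I\<close> mg_gt this S_grid]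
    show ?thesis using s False \<open>Ib \<le> I\<close> \<open>I \<le> S\<close> by simp
  qed
qed

lemma stage_gap:
  fixes C :: "nat \<Rightarrow> real \<Rightarrow> real"
  assumes cv: "\<forall>t<T. convex_on UNIV (C t)"
    and top: "\<forall>t<T. filterlim (C t) at_top at_top" and bot: "\<forall>t<T. filterlim (C t) at_top at_bot"
    and K: "\<forall>t<T. 0 \<le> K t" and "0 < \<theta>"
  shows "j < T \<Longrightarrow> (case stage T \<alpha> K \<theta> C f j of
           (H, S, s, _, Ib) \<Rightarrow> Ib \<le> s \<and> H S + K (T - 1 - j) \<le> H (s - \<theta>))"
proof (induction j)
  case 0
  let ?C = "C (T - 1)" and ?s = "slast (C (T - 1)) (K (T - 1))"
  have "T - 1 < T" using 0 by simp
  then have cont: "continuous_on UNIV ?C"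
    using cv convex_on_continuous[OF open_UNIV] by blast
  have "?s \<le> Cmin ?C" and C_s: "?C ?s = ?C (Cmin ?C) + K (T - 1)"
    using slast_spec[OF cont] bot K \<open>T - 1 < T\<close> by auto
  moreover have "\<And>x. ?C (Cmin ?C) \<le> ?C x"
    using Cmin_minimal[OF cont] top bot \<open>T - 1 < T\<close> by blast
  ultimately have "?C ?s \<le> ?C (?s - \<theta>)"
    using convex_on_antimono_below_min[of ?C "Cmin ?C" "?s - \<theta>" ?s] cv \<open>T - 1 < T\<close> \<open>0 < \<theta>\<close>
    by simp
  then show ?case using C_s by simp
next
  case (Suc j)
  obtain H' S' s' I' Ib' where prev: "stage T \<alpha> K \<theta> C f j = (H', S', s', I', Ib')"
    by (rule prod_cases5)
  obtain H S s I Ib where cur: "stage T \<alpha> K \<theta> C f (Suc j) = (H, S, s, I, Ib)"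
    by (rule prod_cases5)
  have "Ib' \<le> s'" using Suc prev by simp
  have t: "T - 2 - j < T" "T - 1 - Suc j = T - 2 - j" using Suc.prems by simp_all
  have "Ib \<le> s \<and> H S + K (T - 2 - j) \<le> H (s - \<theta>)"
    using stage_Suc_gap[OF _ _ _ _ \<open>0 < \<theta>\<close> prev \<open>Ib' \<le> s'\<close> cur] cv top bot K t(1) by blast
  then show ?case
    unfolding cur using t(2) by simp
qed

theorem corollary4p1:
  fixes T :: nat and \<alpha> \<theta> :: real and c K :: "nat \<Rightarrow> real"
    and G :: "nat \<Rightarrow> real \<Rightarrow> real" and M :: "nat \<Rightarrow> real measure"
  assumes "2 \<le> T" and "0 < \<alpha>" and "\<alpha> \<le> 1" and "0 < \<theta>"
    and "\<forall>t<T. prob_space (M t)"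
    and "\<forall>t<T. sets (M t) = sets borel"
    and "\<forall>t<T. AE x in M t. 0 \<le> x"
    and "\<forall>t<T. integrable (M t) (\<lambda>x. x)"
    and "\<forall>t<T. 0 \<le> K t"
    and "\<forall>t. t + 2 \<le> T \<longrightarrow> \<alpha> * K (Suc t) \<le> K t"
    and "\<forall>t<T. convex_on UNIV (Ccost \<alpha> c G M t)"
    and "\<forall>t<T. filterlim (Ccost \<alpha> c G M t) at_top at_top"
    and "\<forall>t<T. filterlim (Ccost \<alpha> c G M t) at_top at_bot"
    and "\<forall>t y. t + 2 \<le> T \<longrightarrow>
           summable (\<lambda>k::nat. \<bar>Vf T \<alpha> K \<theta> (Ccost \<alpha> c G M) (fprob M \<theta>) (Suc t) (y - zg \<theta> (int k - 1))\<bar>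
                              * fprob M \<theta> t (int k - 1))"
  shows "\<forall>t<T. Hf T \<alpha> K \<theta> (Ccost \<alpha> c G M) (fprob M \<theta>) t (sf T \<alpha> K \<theta> (Ccost \<alpha> c G M) (fprob M \<theta>) t - \<theta>)
              \<ge> Hf T \<alpha> K \<theta> (Ccost \<alpha> c G M) (fprob M \<theta>) t (Sf T \<alpha> K \<theta> (Ccost \<alpha> c G M) (fprob M \<theta>) t) + K t"
proof (intro allI impI)
  fix t assume "t < T"
  let ?C = "Ccost \<alpha> c G M" and ?f = "fprob M \<theta>"
  obtain H S s I Ib where st: "stage T \<alpha> K \<theta> ?C ?f (T - 1 - t) = (H, S, s, I, Ib)"
    by (rule prod_cases5)
  have "case stage T \<alpha> K \<theta> ?C ?f (T - 1 - t) of
          (H, S, s, _, Ib) \<Rightarrow> Ib \<le> s \<and> H S + K (T - 1 - (T - 1 - t)) \<le> H (s - \<theta>)"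
    by (rule stage_gap[OF assms(11,12,13,9,4)]) (use \<open>t < T\<close> in linarith)
  then have "H S + K t \<le> H (s - \<theta>)"
    unfolding st using \<open>t < T\<close> by simp
  then show "Hf T \<alpha> K \<theta> ?C ?f t (sf T \<alpha> K \<theta> ?C ?f t - \<theta>) \<ge> Hf T \<alpha> K \<theta> ?C ?f t (Sf T \<alpha> K \<theta> ?C ?f t) + K t"
    unfolding Hf_def Sf_def sf_def st by simp
qed

end
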